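(* Let $d$ be an integer and let $b=(b_1,\ldots,b_n)$, $\alpha=(\alpha_1,\ldots,\alpha_n)$, $\beta=(\beta_1,\ldots,\beta_n)$ be vectors of nonnegative integers with $\alpha_1\le\cdots\le\alpha_n=d$, $\beta_1\le\cdots\le\beta_n=d$, $\alpha_i\le\beta_i$ for all $i$, $\alpha_1=0$ and $\beta_1=b_1$. Then the system $$0\le u_i\le b_i\ (i=1,\ldots,n),\qquad \alpha_i\le u_1+\cdots+u_i\le\beta_i\ (i=1,\ldots,n)$$ has an integral solution $u=(u_1,\ldots,u_n)$ if and only if $\beta_i+b_{i+1}+\cdots+b_j\ge\alpha_j$ for every pair $i,j$ with $1\le i\le j\le n$. *)

theory Defs
  imports Main
begin

end

theory Submission
  imports Defs
begin

text \<open>Necessity: on \<open>(i, j]\<close> the partial sums of \<open>u\<close> grow by at most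
  \<open>b (i+1) + \<dots> + b j\<close>.  Sufficiency: choose the partial sums greedily as large as the
  upper constraints allow, \<open>s i = min (\<beta> i) (s (i-1) + b i)\<close>.  Monotonicity of \<open>\<beta>\<close> keeps
  the increments \<open>s i - s (i-1)\<close> in \<open>[0, b i]\<close>, and unfolding the minimum shows
  \<open>s i = \<beta> j + b (j+1) + \<dots> + b i\<close> for some \<open>j \<le> i\<close>, which the hypothesis bounds
  below by \<open>\<alpha> i\<close>.\<close>

lemma partial_sum_le_add_bound:
  fixes u b :: "nat \<Rightarrow> int"
  assumes "i \<le> j" and "\<forall>k\<in>{i<..j}. u k \<le> b k"
  shows "(\<Sum>k=1..j. u k) \<le> (\<Sum>k=1..i. u k) + (\<Sum>k=i+1..j. b k)"
proof -
  have "(\<Sum>k=1..j. u k) = (\<Sum>k=1..i. u k) + (\<Sum>k=i+1..j. u k)"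
    using assms(1) sum.ub_add_nat[of 1 i u "j - i"] by (cases i) simp_all
  also have "(\<Sum>k=i+1..j. u k) \<le> (\<Sum>k=i+1..j. b k)"
    using assms(2) by (intro sum_mono) auto
  finally show ?thesis by simp
qed

primrec greedy_sum :: "(nat \<Rightarrow> int) \<Rightarrow> (nat \<Rightarrow> int) \<Rightarrow> nat \<Rightarrow> int" where
  "greedy_sum \<beta> b 0 = 0"
| "greedy_sum \<beta> b (Suc i) = min (\<beta> (Suc i)) (greedy_sum \<beta> b i + b (Suc i))"

lemma greedy_sum_le: "1 \<le> i \<Longrightarrow> greedy_sum \<beta> b i \<le> \<beta> i"
  by (cases i) auto

lemma greedy_sum_step_nonneg:
  assumes "0 \<le> b (Suc i)" and "1 \<le> i \<Longrightarrow> \<beta> i \<le> \<beta> (Suc i)" and "i = 0 \<Longrightarrow> 0 \<le> \<beta> 1"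
  shows "greedy_sum \<beta> b i \<le> greedy_sum \<beta> b (Suc i)"
  using assms greedy_sum_le[of i \<beta> b] by (cases i) auto

lemma greedy_sum_eq_tail:
  assumes "1 \<le> i" and "\<beta> 1 \<le> b 1"
  shows "\<exists>j\<in>{1..i}. greedy_sum \<beta> b i = \<beta> j + (\<Sum>k=j+1..i. b k)"
  using assms(1)
proof (induction i rule: dec_induct)
  case base
  show ?case using assms(2) by simp
next
  case (step i)
  show ?case
  proof (cases "\<beta> (Suc i) \<le> greedy_sum \<beta> b i + b (Suc i)")
    case True
    then show ?thesis by (intro bexI[of _ "Suc i"]) auto
  next
    case False
    from step.IH obtain j where "j \<in> {1..i}" and "greedy_sum \<beta> b i = \<beta> j + (\<Sum>k=j+1..i. b k)"
      by blast
    with False show ?thesis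
      by (intro bexI[of _ j]) (auto simp: sum.cl_ivl_Suc)
  qed
qed

lemma greedy_solution:
  fixes n :: nat and b \<alpha> \<beta> :: "nat \<Rightarrow> int"
  assumes "\<forall>i\<in>{1..n}. 0 \<le> b i"
    and "\<forall>i\<in>{1..<n}. \<beta> i \<le> \<beta> (i + 1)"
    and "0 \<le> \<beta> 1" and "\<beta> 1 \<le> b 1"
    and "\<forall>i j. 1 \<le> i \<and> i \<le> j \<and> j \<le> n \<longrightarrow> \<alpha> j \<le> \<beta> i + (\<Sum>k=i+1..j. b k)"
  defines "u \<equiv> \<lambda>k. greedy_sum \<beta> b k - greedy_sum \<beta> b (k - 1)"
  shows "\<forall>i\<in>{1..n}. 0 \<le> u i \<and> u i \<le> b i"
    and "\<forall>i\<in>{1..n}. \<alpha> i \<le> (\<Sum>k=1..i. u k) \<and> (\<Sum>k=1..i. u k) \<le> \<beta> i"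
proof -
  have partial_sum: "(\<Sum>k=1..i. u k) = greedy_sum \<beta> b i" for i
    using sum_telescope''[of 0 i "greedy_sum \<beta> b"] by (simp add: u_def)
  show "\<forall>i\<in>{1..n}. 0 \<le> u i \<and> u i \<le> b i"
  proof
    fix i assume i: "i \<in> {1..n}"
    then obtain m where m: "i = Suc m" by (cases i) auto
    have "greedy_sum \<beta> b m \<le> greedy_sum \<beta> b (Suc m)"
      using assms(1-3) i m by (intro greedy_sum_step_nonneg) auto
    then show "0 \<le> u i \<and> u i \<le> b i"
      using m by (simp add: u_def)
  qed
  show "\<forall>i\<in>{1..n}. \<alpha> i \<le> (\<Sum>k=1..i. u k) \<and> (\<Sum>k=1..i. u k) \<le> \<beta> i"
  proof
    fix i assume i: "i \<in> {1..n}"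
    then obtain j where "j \<in> {1..i}" and "greedy_sum \<beta> b i = \<beta> j + (\<Sum>k=j+1..i. b k)"
      using greedy_sum_eq_tail[of i \<beta> b] assms(4) by auto
    moreover have "\<alpha> i \<le> \<beta> j + (\<Sum>k=j+1..i. b k)"
      using assms(5) i \<open>j \<in> {1..i}\<close> by auto
    ultimately show "\<alpha> i \<le> (\<Sum>k=1..i. u k) \<and> (\<Sum>k=1..i. u k) \<le> \<beta> i"
      unfolding partial_sum using i greedy_sum_le[of i \<beta> b] by simp
  qed
qed

text \<open>Besides \<open>b \<ge> 0\<close>, only the monotonicity of \<open>\<beta>\<close> and \<open>\<beta> 1 = b 1\<close> are needed.\<close>

theorem lemma3p1:
  fixes n :: nat and d :: int and b alpha beta :: "nat \<Rightarrow> int"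
  assumes "n \<ge> 1"
    and "\<forall>i\<in>{1..n}. b i \<ge> 0 \<and> alpha i \<ge> 0 \<and> beta i \<ge> 0"
    and "\<forall>i\<in>{1..<n}. alpha i \<le> alpha (i + 1)"
    and "\<forall>i\<in>{1..<n}. beta i \<le> beta (i + 1)"
    and "alpha n = d" and "beta n = d"
    and "\<forall>i\<in>{1..n}. alpha i \<le> beta i"
    and "alpha 1 = 0" and "beta 1 = b 1"
  shows "(\<exists>u :: nat \<Rightarrow> int.
            (\<forall>i\<in>{1..n}. 0 \<le> u i \<and> u i \<le> b i) \<and>
            (\<forall>i\<in>{1..n}. alpha i \<le> (\<Sum>k=1..i. u k) \<and> (\<Sum>k=1..i. u k) \<le> beta i))
         \<longleftrightarrow> (\<forall>i j. 1 \<le> i \<and> i \<le> j \<and> j \<le> n \<longrightarrow>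
                  beta i + (\<Sum>k=i+1..j. b k) \<ge> alpha j)"
proof
  assume "\<exists>u :: nat \<Rightarrow> int.
            (\<forall>i\<in>{1..n}. 0 \<le> u i \<and> u i \<le> b i) \<and>
            (\<forall>i\<in>{1..n}. alpha i \<le> (\<Sum>k=1..i. u k) \<and> (\<Sum>k=1..i. u k) \<le> beta i)"
  then obtain u :: "nat \<Rightarrow> int" where bounds: "\<forall>i\<in>{1..n}. 0 \<le> u i \<and> u i \<le> b i"
    and sums: "\<forall>i\<in>{1..n}. alpha i \<le> (\<Sum>k=1..i. u k) \<and> (\<Sum>k=1..i. u k) \<le> beta i"
    by blast
  show "\<forall>i j. 1 \<le> i \<and> i \<le> j \<and> j \<le> n \<longrightarrow> beta i + (\<Sum>k=i+1..j. b k) \<ge> alpha j"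
  proof (intro allI impI)
    fix i j assume ij: "1 \<le> i \<and> i \<le> j \<and> j \<le> n"
    then have "(\<Sum>k=1..j. u k) \<le> (\<Sum>k=1..i. u k) + (\<Sum>k=i+1..j. b k)"
      using bounds by (intro partial_sum_le_add_bound) auto
    moreover have "alpha j \<le> (\<Sum>k=1..j. u k)" and "(\<Sum>k=1..i. u k) \<le> beta i"
      using sums ij by auto
    ultimately show "beta i + (\<Sum>k=i+1..j. b k) \<ge> alpha j" by linarith
  qed
next
  assume condition: "\<forall>i j. 1 \<le> i \<and> i \<le> j \<and> j \<le> n \<longrightarrow> beta i + (\<Sum>k=i+1..j. b k) \<ge> alpha j"
  have "\<forall>i\<in>{1..n}. 0 \<le> b i" and "0 \<le> beta 1" and "beta 1 \<le> b 1"
    using assms(1,2,9) by auto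
  from greedy_solution[OF this(1) assms(4) this(2,3) condition]
  show "\<exists>u :: nat \<Rightarrow> int.
            (\<forall>i\<in>{1..n}. 0 \<le> u i \<and> u i \<le> b i) \<and>
            (\<forall>i\<in>{1..n}. alpha i \<le> (\<Sum>k=1..i. u k) \<and> (\<Sum>k=1..i. u k) \<le> beta i)"
    by (intro exI[of _ "\<lambda>k. greedy_sum beta b k - greedy_sum beta b (k - 1)"] conjI)
qed

end
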